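(* For all sufficiently large $n$ one has $k_n>0$; setting $u_n=k_n^{1/2}\langle k_n\theta\rangle$ and $v_n=k_n^{1/2}\langle k_n\theta^2\rangle$ for such $n$, $$\lim_{n\to\infty}\Big((\theta u_n-2v_n)^2+(3\theta^2-4p)u_n^2\Big)=\frac{4d^3}{3\theta^2-p};$$ that is, the points $(u_n,v_n)$ approach the ellipse $(\theta x-2y)^2+(3\theta^2-4p)x^2=\frac{4d^3}{3\theta^2-p}$.
   Context: Standing setup: $p,q\in\mathbb{Z}$ are such that $x^3-px-q$ is irreducible over $\mathbb{Q}$ with exactly one real root $\theta$ (one has $3\theta^2-4p>0$ and $3\theta^2-p>0$). $K=\mathbb{Q}(\theta)\subset\mathbb{R}$, $\mathcal{O}_K$ its ring of integers. $d$ is a positive integer with $\mathcal{O}_K\subseteq\frac1d\mathbb{Z}[\theta]$. $\lambda\in\mathcal{O}_K$ is a unit with $\lambda>1$. For $n\ge1$ the rationals $a_n,b_n,c_n$ are defined by $a_n+b_n\theta+c_n\theta^2=\lambda^n$, and $k_n=dc_n$. For $x\in\mathbb{R}$, $\langle x\rangle=x-\lfloor x+\tfrac12\rfloor$. *)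

theory Defs
  imports "HOL-Analysis.Analysis" "HOL-Computational_Algebra.Polynomial"
begin

definition alg_int :: "real \<Rightarrow> bool" where
  "alg_int x \<longleftrightarrow> (\<exists>P :: int poly. lead_coeff P = 1 \<and> poly (map_poly of_int P) x = 0)"

definition numfield :: "real \<Rightarrow> real set" where
  "numfield \<theta> = {x. \<exists>r0 r1 r2 :: rat. x = of_rat r0 + of_rat r1 * \<theta> + of_rat r2 * \<theta>^2}"

definition ring_of_integers :: "real \<Rightarrow> real set" where
  "ring_of_integers \<theta> = {x \<in> numfield \<theta>. alg_int x}"

definition nidist :: "real \<Rightarrow> real" where
  "nidist x = x - of_int \<lfloor>x + 1/2\<rfloor>"

end

theory Submission
  imports Defs Jordan_Normal_Form.Char_Poly
begin

text \<open>
  Write \<open>\<lambda>\<^sup>n = a\<^sub>n + b\<^sub>n\<theta> + c\<^sub>n\<theta>\<^sup>2\<close>. The norm of an element \<open>x\<close> of \<open>\<O>\<^sub>K\<close> is an integer,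
  because \<open>d\<^sup>3 N(x)\<^sup>n = d\<^sup>3 N(x\<^sup>n)\<close> is an integer for every \<open>n\<close>; so the positive unit \<open>\<lambda>\<^sup>n\<close>
  has norm 1. Now \<open>N(x) = x |x'|\<^sup>2\<close> for a complex conjugate \<open>x'\<close>, and \<open>4|x'|\<^sup>2\<close> is a sum of
  two squares in the coordinates, whence
  \<open>(\<theta>U\<^sub>n - 2V\<^sub>n)\<^sup>2 + (3\<theta>\<^sup>2 - 4p)U\<^sub>n\<^sup>2 = 4/\<lambda>\<^sup>n\<close> with \<open>U\<^sub>n = c\<^sub>n\<theta> - b\<^sub>n\<close> and
  \<open>V\<^sub>n = c\<^sub>n\<theta>\<^sup>2 - a\<^sub>n - pc\<^sub>n\<close>; here \<open>3\<theta>\<^sup>2 - 4p > 0\<close> because the conjugates are not real.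
  Hence \<open>U\<^sub>n, V\<^sub>n \<rightarrow> 0\<close>. As \<open>db\<^sub>n\<close> and \<open>d(a\<^sub>n + pc\<^sub>n)\<close> are integers, \<open>dU\<^sub>n\<close> and \<open>dV\<^sub>n\<close>
  are eventually the signed distances of \<open>k\<^sub>n\<theta>\<close> and \<open>k\<^sub>n\<theta>\<^sup>2\<close> to the integers, and the
  identity \<open>(3\<theta>\<^sup>2 - p)c\<^sub>n = \<lambda>\<^sup>n + \<theta>U\<^sub>n + V\<^sub>n\<close> gives \<open>c\<^sub>n/\<lambda>\<^sup>n \<rightarrow> 1/(3\<theta>\<^sup>2 - p)\<close>.
  Multiplying the first identity by \<open>k\<^sub>n d\<^sup>2\<close> yields the limit.
\<close>

section \<open>Algebraic integers\<close>

lemma alg_int_if_eigenvalue: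
  fixes A :: "int mat"
  assumes A: "A \<in> carrier_mat m m" and ev: "eigenvalue (map_mat of_int A) x"
  shows "alg_int x"
proof -
  have "poly (char_poly (map_mat of_int A)) x = 0"
    using ev eigenvalue_root_char_poly[of "map_mat of_int A :: real mat" m] A by simp
  moreover have "char_poly (map_mat of_int A :: real mat) = map_poly of_int (char_poly A)"
    by (rule of_int_hom.char_poly_hom[OF A])
  moreover have "lead_coeff (char_poly A) = 1"
    using degree_monic_char_poly[OF A] by simp
  ultimately show ?thesis unfolding alg_int_def by auto
qed

definition companion_mat :: "int poly \<Rightarrow> int mat" where
  "companion_mat P = mat (degree P) (degree P)
    (\<lambda>(j, k). if Suc j < degree P then (if k = Suc j then 1 else 0) else - coeff P k)"

lemma companion_mat_eigen:
  fixes x :: real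
  assumes P_monic: "lead_coeff P = 1" and P_root: "poly (map_poly of_int P) x = 0"
  defines "v \<equiv> vec (degree P) (\<lambda>j. x ^ j)"
  shows "map_mat of_int (companion_mat P) *\<^sub>v v = x \<cdot>\<^sub>v v"
proof (rule eq_vecI)
  define m where "m = degree P"
  have P_root': "(\<Sum>k<m. real_of_int (coeff P k) * x ^ k) = - (x ^ m)"
  proof -
    have "poly (map_poly of_int P) x = (\<Sum>k\<le>m. real_of_int (coeff P k) * x ^ k)"
      unfolding poly_altdef m_def by (simp add: degree_map_poly)
    also have "\<dots> = (\<Sum>k<m. real_of_int (coeff P k) * x ^ k) + x ^ m"
      using P_monic m_def by (simp add: lessThan_Suc_atMost[symmetric])
    finally show ?thesis using P_root by simp
  qed
  fix j assume "j < dim_vec (x \<cdot>\<^sub>v v)"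
  then have j: "j < m" unfolding v_def m_def by simp
  have "(map_mat of_int (companion_mat P) *\<^sub>v v) $ j
      = (\<Sum>k<m. real_of_int (companion_mat P $$ (j, k)) * x ^ k)"
    using j by (auto simp: v_def m_def companion_mat_def scalar_prod_def lessThan_atLeast0 intro!: sum.cong)
  also have "\<dots> = x ^ Suc j"
  proof (cases "Suc j < m")
    case True
    then have "(\<Sum>k<m. real_of_int (companion_mat P $$ (j, k)) * x ^ k)
        = (\<Sum>k<m. if k = Suc j then x ^ k else 0)"
      using j by (intro sum.cong) (auto simp: companion_mat_def m_def)
    then show ?thesis using True by simp
  next
    case False
    then have "(\<Sum>k<m. real_of_int (companion_mat P $$ (j, k)) * x ^ k)
        = - (\<Sum>k<m. real_of_int (coeff P k) * x ^ k)"
      using j by (simp add: sum_negf[symmetric] companion_mat_def m_def)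
    moreover have "m = Suc j" using False j by simp
    ultimately show ?thesis using P_root' by simp
  qed
  finally show "(map_mat of_int (companion_mat P) *\<^sub>v v) $ j = (x \<cdot>\<^sub>v v) $ j"
    using j by (simp add: v_def m_def)
qed (simp add: companion_mat_def v_def)

lemma alg_int_eigenvector_of_int_mat:
  assumes "alg_int x"
  obtains m and A :: "int mat" and v where "A \<in> carrier_mat m m"
    and "eigenvector (map_mat of_int A) v x"
proof -
  obtain P :: "int poly" where P_monic: "lead_coeff P = 1" and P_root: "poly (map_poly of_int P) x = 0"
    using assms unfolding alg_int_def by blast
  define v where "v = vec (degree P) (\<lambda>j. x ^ j)"
  have "degree P > 0"
  proof (rule ccontr)
    assume "\<not> degree P > 0"
    then have "P = 1" using degree_0_id[of P] P_monic by (simp add: one_pCons)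
    then show False using P_root by simp
  qed
  have "v \<noteq> 0\<^sub>v (degree P)"
  proof
    assume "v = 0\<^sub>v (degree P)"
    then have "v $ 0 = 0" using \<open>degree P > 0\<close> by simp
    then show False using \<open>degree P > 0\<close> by (simp add: v_def)
  qed
  then have "eigenvector (map_mat of_int (companion_mat P)) v x"
    using companion_mat_eigen[OF P_monic P_root]
    unfolding eigenvector_def by (simp add: v_def companion_mat_def)
  moreover have "companion_mat P \<in> carrier_mat (degree P) (degree P)"
    by (simp add: companion_mat_def)
  ultimately show thesis using that by blast
qed

lemma alg_int_power:
  assumes "alg_int x"
  shows "alg_int (x ^ n)"
proof -
  obtain m and A :: "int mat" and v where A: "A \<in> carrier_mat m m"
    and ev: "eigenvector (map_mat of_int A) v x"
    using alg_int_eigenvector_of_int_mat[OF assms] .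
  have A_real: "map_mat real_of_int A \<in> carrier_mat m m" using A by simp
  have "map_mat of_int (A ^\<^sub>m n) *\<^sub>v v = map_mat of_int A ^\<^sub>m n *\<^sub>v v"
    by (simp add: of_int_hom.mat_hom_pow[OF A])
  also have "\<dots> = x ^ n \<cdot>\<^sub>v v"
    by (rule eigenvector_pow[OF A_real ev])
  finally have "map_mat of_int (A ^\<^sub>m n) *\<^sub>v v = x ^ n \<cdot>\<^sub>v v" .
  then have "eigenvector (map_mat of_int (A ^\<^sub>m n)) v (x ^ n)"
    using ev A unfolding eigenvector_def by simp
  then show ?thesis
    by (intro alg_int_if_eigenvalue[of "A ^\<^sub>m n" m]) (use A in \<open>auto simp: eigenvalue_def\<close>)
qed

section \<open>Arithmetic in coordinates\<close>

text \<open>A triple \<open>(a, b, c)\<close> stands for \<open>a + b\<theta> + c\<theta>\<^sup>2\<close> where \<open>\<theta>\<^sup>3 = P\<theta> + Q\<close>.\<close>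

fun cubic_val :: "real \<Rightarrow> rat \<times> rat \<times> rat \<Rightarrow> real" where
  "cubic_val t (a, b, c) = of_rat a + of_rat b * t + of_rat c * t^2"

fun cubic_mult :: "rat \<Rightarrow> rat \<Rightarrow> rat \<times> rat \<times> rat \<Rightarrow> rat \<times> rat \<times> rat \<Rightarrow> rat \<times> rat \<times> rat" where
  "cubic_mult P Q (a, b, c) (a', b', c') =
    (a*a' + Q*(b*c' + c*b'), a*b' + b*a' + P*(b*c' + c*b') + Q*c*c', a*c' + b*b' + c*a' + P*c*c')"

fun cubic_power :: "rat \<Rightarrow> rat \<Rightarrow> rat \<times> rat \<times> rat \<Rightarrow> nat \<Rightarrow> rat \<times> rat \<times> rat" where
  "cubic_power P Q X 0 = (1, 0, 0)"
| "cubic_power P Q X (Suc n) = cubic_mult P Q (cubic_power P Q X n) X"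

text \<open>The norm, i.e.\ the determinant of multiplication by \<open>a + b\<theta> + c\<theta>\<^sup>2\<close>.\<close>
fun cubic_norm :: "'a::comm_ring_1 \<Rightarrow> 'a \<Rightarrow> 'a \<times> 'a \<times> 'a \<Rightarrow> 'a" where
  "cubic_norm P Q (a, b, c) = a*((a + c*P)*(a + c*P) - b*(b*P + c*Q)) - c*Q*(b*(a + c*P) - c*(b*P + c*Q))
     + b*Q*(b*b - c*(a + c*P))"

declare cubic_norm.simps [simp del]

text \<open>\<open>4|x'|\<^sup>2\<close> for either complex conjugate \<open>x'\<close> of \<open>x = a + b\<theta> + c\<theta>\<^sup>2\<close>.\<close>
fun conj_norm4 :: "real \<Rightarrow> real \<Rightarrow> rat \<times> rat \<times> rat \<Rightarrow> real" where
  "conj_norm4 t P (a, b, c) = (t*(of_rat c*t - of_rat b) - 2*(of_rat c*t^2 - of_rat a - of_rat c*P))^2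
     + (3*t^2 - 4*P)*(of_rat c*t - of_rat b)^2"

lemma cubic_norm_mult: "cubic_norm P Q (cubic_mult P Q X Y) = cubic_norm P Q X * cubic_norm P Q Y"
  by (cases X; cases Y) (simp add: cubic_norm.simps algebra_simps)

lemma cubic_norm_one: "cubic_norm P Q (1, 0, 0) = 1"
  by (simp add: cubic_norm.simps)

lemma cubic_norm_power: "cubic_norm P Q (cubic_power P Q X n) = cubic_norm P Q X ^ n"
  by (induction n) (simp_all add: cubic_norm_mult cubic_norm_one)

lemma cubic_norm_scale: "cubic_norm P Q (k*a, k*b, k*c) = k^3 * cubic_norm P Q (a, b, c)"
  by (simp add: cubic_norm.simps algebra_simps power3_eq_cube)

lemma cubic_norm_denom:
  fixes r0 r1 r2 p q :: int
  assumes "d > 0"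
  shows "of_nat d ^ 3 * cubic_norm (of_int p) (of_int q) (of_int r0 / of_nat d, of_int r1 / of_nat d, of_int r2 / of_nat d)
    = (of_int (cubic_norm p q (r0, r1, r2)) :: rat)"
proof -
  have "of_nat d ^ 3 * cubic_norm (of_int p) (of_int q) (of_int r0 / of_nat d, of_int r1 / of_nat d, of_int r2 / of_nat d)
      = (cubic_norm (of_int p) (of_int q)
          (of_nat d * (of_int r0 / of_nat d), of_nat d * (of_int r1 / of_nat d), of_nat d * (of_int r2 / of_nat d)) :: rat)"
    by (rule cubic_norm_scale[symmetric])
  also have "\<dots> = cubic_norm (of_int p) (of_int q) (of_int r0, of_int r1, of_int r2)"
    using assms by simp
  also have "\<dots> = of_int (cubic_norm p q (r0, r1, r2))"
    by (simp add: cubic_norm.simps)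
  finally show ?thesis .
qed

lemma conj_norm4_nonneg: "3*t^2 - 4*P \<ge> 0 \<Longrightarrow> conj_norm4 t P X \<ge> 0"
  by (cases X) simp

lemma cubic_val_mult:
  assumes "t^3 = of_int p*t + of_int q"
  shows "cubic_val t (cubic_mult (of_int p) (of_int q) X Y) = cubic_val t X * cubic_val t Y"
proof -
  have q: "of_int q = t^3 - of_int p * t" using assms by simp
  show ?thesis
    by (cases X; cases Y) (simp add: of_rat_add of_rat_mult q algebra_simps power2_eq_square power3_eq_cube)
qed

lemma cubic_val_power:
  assumes "t^3 = of_int p*t + of_int q"
  shows "cubic_val t (cubic_power (of_int p) (of_int q) X n) = cubic_val t X ^ n"
  by (induction n) (simp_all add: cubic_val_mult[OF assms])

lemma cubic_val_mult_conj_norm4: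
  assumes "t^3 = of_int p*t + of_int q"
  shows "cubic_val t X * conj_norm4 t (of_int p) X = 4 * of_rat (cubic_norm (of_int p) (of_int q) X)"
proof -
  have q: "of_int q = t^3 - of_int p * t" using assms by simp
  show ?thesis
    by (cases X) (simp add: cubic_norm.simps of_rat_add of_rat_mult of_rat_diff q algebra_simps
        power2_eq_square power3_eq_cube)
qed

lemma numfield_iff_cubic_val: "x \<in> numfield t \<longleftrightarrow> (\<exists>X. cubic_val t X = x)"
  unfolding numfield_def by force

section \<open>The cubic field\<close>

lemma irreducible_not_mult:
  fixes f g h :: "'a::field poly"
  assumes "irreducible f" "f = g * h" "degree g > 0" "degree h > 0"
  shows False
proof -
  have "g \<noteq> 0" "h \<noteq> 0" using assms(3,4) by auto
  then show False
    using irreducibleD[OF assms(1,2)] assms(3,4) is_unit_iff_degree by auto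
qed

lemma Ints_if_bounded_denominator_powers:
  fixes r :: rat and D :: int
  assumes D: "D > 0" and H: "\<forall>n\<ge>1. of_int D * r^n \<in> \<int>"
  shows "r \<in> \<int>"
proof -
  obtain s t where st: "quotient_of r = (s, t)" by (cases "quotient_of r")
  have t_pos: "t > 0" and cop: "coprime s t" and r: "r = of_int s / of_int t"
    using quotient_of_denom_pos quotient_of_coprime quotient_of_div st by blast+
  have "t = 1"
  proof (rule ccontr)
    assume "t \<noteq> 1"
    with t_pos have t2: "t \<ge> 2" by simp
    define n where "n = nat D"
    have "of_int D * r^n \<in> \<int>" using H D by (simp add: n_def)
    then obtain k where "of_int D * r^n = of_int k" by (elim Ints_cases)
    then have "of_int (D * s^n) = (of_int (k * t^n) :: rat)"
      using t_pos unfolding r by (simp add: power_divide field_simps)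
    then have "t^n dvd D * s^n" by (metis dvd_triv_right of_int_eq_iff)
    moreover have "coprime (t^n) (s^n)" using cop by (simp add: coprime_commute)
    ultimately have "t^n \<le> D" using D by (simp add: coprime_dvd_mult_left_iff zdvd_imp_le)
    moreover have "(2::int)^n \<le> t^n" using t2 by (simp add: power_mono)
    moreover have "int n < 2^n" by (metis less_exp of_nat_less_iff of_nat_numeral of_nat_power)
    ultimately show False using n_def D by simp
  qed
  then show "r \<in> \<int>" using r by simp
qed

locale cubic_field =
  fixes p q :: int and \<theta> :: real
  assumes irreducible: "irreducible ([:- of_int q, - of_int p, 0, 1:] :: rat poly)"
    and root: "\<theta>^3 - of_int p * \<theta> - of_int q = 0"
begin

abbreviation norm\<^sub>K :: "rat \<times> rat \<times> rat \<Rightarrow> rat" where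
  "norm\<^sub>K \<equiv> cubic_norm (of_int p) (of_int q)"

lemma theta_cube: "\<theta>^3 = of_int p * \<theta> + of_int q"
  using root by simp

lemma theta_not_rat: "\<theta> \<noteq> of_rat r"
proof
  assume th: "\<theta> = of_rat r"
  have "of_rat (r^3 - of_int p * r - of_int q) = (0::real)"
    using root th by (simp add: of_rat_diff of_rat_mult of_rat_power)
  then have "of_int q = r^3 - of_int p * r" by simp
  then have "([:- of_int q, - of_int p, 0, 1:] :: rat poly) = [:-r, 1:] * [:r^2 - of_int p, r, 1:]"
    by (simp add: algebra_simps power2_eq_square power3_eq_cube)
  then show False using irreducible_not_mult[OF irreducible] by fastforce
qed

lemma coords_eq_0:
  assumes "of_rat r0 + of_rat r1 * \<theta> + of_rat r2 * \<theta>^2 = 0"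
  shows "r0 = 0 \<and> r1 = 0 \<and> r2 = 0"
proof (cases "r2 = 0")
  case True
  then show ?thesis
    using assms theta_not_rat[of "- r0 / r1"]
    by (cases "r1 = 0") (auto simp: of_rat_divide of_rat_minus field_simps)
next
  case False
  define s where "s = - r1 / r2"
  define t where "t = - r0 / r2"
  have sq: "\<theta>^2 = of_rat s * \<theta> + of_rat t"
    using assms False unfolding s_def t_def by (simp add: of_rat_divide of_rat_minus field_simps)
  have "\<theta>^3 = \<theta> * (of_rat s * \<theta> + of_rat t)"
    by (simp only: sq[symmetric]) (simp add: power2_eq_square power3_eq_cube)
  also have "\<dots> = of_rat s * \<theta>^2 + of_rat t * \<theta>"
    by (simp add: power2_eq_square algebra_simps)
  also have "\<dots> = (of_rat s^2 + of_rat t) * \<theta> + of_rat s * of_rat t"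
    by (simp only: sq) (simp add: power2_eq_square algebra_simps)
  finally have lin: "of_rat (s^2 + t - of_int p) * \<theta> + of_rat (s*t - of_int q) = 0"
    using root by (simp add: of_rat_add of_rat_diff of_rat_mult of_rat_power algebra_simps)
  show ?thesis
  proof (cases "s^2 + t - of_int p = 0")
    case False
    then have "(of_rat (s^2 + t - of_int p) :: real) \<noteq> 0" by simp
    then have "\<theta> = - of_rat (s*t - of_int q) / of_rat (s^2 + t - of_int p)"
      using lin by (simp add: field_simps)
    then have "\<theta> = of_rat (- (s*t - of_int q) / (s^2 + t - of_int p))"
      by (metis of_rat_divide of_rat_minus minus_divide_left)
    with theta_not_rat show ?thesis by blast
  next
    case True
    with lin have "s*t - of_int q = 0" by simp
    with True have "([:- of_int q, - of_int p, 0, 1:] :: rat poly) = [:-t, -s, 1:] * [:s, 1:]"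
      by (simp add: algebra_simps power2_eq_square)
    then show ?thesis using irreducible_not_mult[OF irreducible] by fastforce
  qed
qed

lemma cubic_val_inj:
  assumes "cubic_val \<theta> X = cubic_val \<theta> Y"
  shows "X = Y"
proof -
  obtain a b c where X: "X = (a, b, c)" by (cases X) auto
  obtain a' b' c' where Y: "Y = (a', b', c')" by (cases Y) auto
  have "of_rat (a - a') + of_rat (b - b') * \<theta> + of_rat (c - c') * \<theta>^2 = 0"
    using assms by (simp add: X Y of_rat_diff algebra_simps)
  from coords_eq_0[OF this] show ?thesis by (simp add: X Y)
qed

lemma ring_of_integers_power:
  assumes "x \<in> ring_of_integers \<theta>"
  shows "x ^ n \<in> ring_of_integers \<theta>"
proof -
  obtain X where "cubic_val \<theta> X = x"
    using assms unfolding ring_of_integers_def numfield_iff_cubic_val by blast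
  then have "x ^ n \<in> numfield \<theta>"
    unfolding numfield_iff_cubic_val using cubic_val_power[OF theta_cube] by metis
  then show ?thesis
    using assms alg_int_power unfolding ring_of_integers_def by blast
qed

text \<open>If \<open>3\<theta>\<^sup>2 - 4p \<le> 0\<close>, the other two roots \<open>(-\<theta> \<plusminus> s)/2\<close>, \<open>s\<^sup>2 = 4p - 3\<theta>\<^sup>2\<close>,
  are real as well, and both equal to \<open>\<theta>\<close> only if \<open>\<theta> = 0\<close>.\<close>
lemma disc_pos:
  assumes unique_real_root: "\<forall>x::real. x^3 - of_int p * x - of_int q = 0 \<longrightarrow> x = \<theta>"
  shows "3 * \<theta>^2 - 4 * of_int p > 0"
proof (rule ccontr)
  assume not_pos: "\<not> 3 * \<theta>^2 - 4 * of_int p > 0"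
  define s where "s = sqrt (4 * of_int p - 3 * \<theta>^2)"
  have s2: "s^2 = 4 * of_int p - 3 * \<theta>^2" using not_pos by (simp add: s_def)
  have q: "of_int q = \<theta>^3 - of_int p * \<theta>" using root by simp
  have "x = \<theta>" if "x = (- \<theta> + s) / 2 \<or> x = (- \<theta> - s) / 2" for x
  proof -
    have "2 * x + \<theta> = s \<or> 2 * x + \<theta> = - s" using that by auto
    then have "(2 * x + \<theta>)^2 = s^2" by auto
    then have "x^2 + \<theta> * x + \<theta>^2 - of_int p = 0"
      using s2 by (simp add: power2_eq_square algebra_simps)
    moreover have "x^3 - of_int p * x - of_int q = (x - \<theta>) * (x^2 + \<theta> * x + \<theta>^2 - of_int p)"
      by (simp add: q algebra_simps power2_eq_square power3_eq_cube)
    ultimately show ?thesis using unique_real_root by simp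
  qed
  then have "(- \<theta> + s) / 2 = \<theta>" "(- \<theta> - s) / 2 = \<theta>" by blast+
  then have "\<theta> = of_rat 0" by simp
  with theta_not_rat show False by blast
qed

lemma cubic_norm_nonneg:
  assumes "3 * \<theta>^2 - 4 * of_int p \<ge> 0" and "cubic_val \<theta> X > 0"
  shows "norm\<^sub>K X \<ge> 0"
proof -
  have "0 \<le> cubic_val \<theta> X * conj_norm4 \<theta> (of_int p) X"
    using assms conj_norm4_nonneg by simp
  then show ?thesis using cubic_val_mult_conj_norm4[OF theta_cube] by simp
qed

end

locale cubic_order = cubic_field +
  fixes d :: nat
  assumes d_pos: "d > 0"
    and d_bound: "\<forall>x \<in> ring_of_integers \<theta>.
      \<exists>r0 r1 r2 :: int. x = (of_int r0 + of_int r1 * \<theta> + of_int r2 * \<theta>^2) / real d"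
begin

lemma ring_of_integers_coords:
  assumes "cubic_val \<theta> X \<in> ring_of_integers \<theta>"
  obtains r0 r1 r2 :: int where "X = (of_int r0 / of_nat d, of_int r1 / of_nat d, of_int r2 / of_nat d)"
proof -
  obtain r0 r1 r2 :: int where "cubic_val \<theta> X = (of_int r0 + of_int r1 * \<theta> + of_int r2 * \<theta>^2) / real d"
    using d_bound assms by blast
  also have "\<dots> = cubic_val \<theta> (of_int r0 / of_nat d, of_int r1 / of_nat d, of_int r2 / of_nat d)"
    by (simp add: of_rat_divide add_divide_distrib)
  finally show thesis using cubic_val_inj that by blast
qed

lemma norm_in_Ints:
  assumes "cubic_val \<theta> X \<in> ring_of_integers \<theta>"
  shows "norm\<^sub>K X \<in> \<int>"
proof (rule Ints_if_bounded_denominator_powers)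
  have "of_int (int d ^ 3) * norm\<^sub>K X ^ n \<in> \<int>" for n
  proof -
    have "cubic_val \<theta> (cubic_power (of_int p) (of_int q) X n) \<in> ring_of_integers \<theta>"
      using ring_of_integers_power[OF assms] by (simp add: cubic_val_power[OF theta_cube])
    then obtain r0 r1 r2 :: int
      where "cubic_power (of_int p) (of_int q) X n = (of_int r0 / of_nat d, of_int r1 / of_nat d, of_int r2 / of_nat d)"
      by (rule ring_of_integers_coords)
    then have "of_nat d ^ 3 * norm\<^sub>K X ^ n = of_int (cubic_norm p q (r0, r1, r2))"
      using cubic_norm_power cubic_norm_denom[OF d_pos] by metis
    then show ?thesis by simp
  qed
  then show "\<forall>n\<ge>1. of_int (int d ^ 3) * norm\<^sub>K X ^ n \<in> \<int>" by blast
qed (use d_pos in simp)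

lemma positive_unit_norm_eq_1:
  assumes disc: "3 * \<theta>^2 - 4 * of_int p \<ge> 0"
    and unit: "x \<in> ring_of_integers \<theta>" "inverse x \<in> ring_of_integers \<theta>"
    and x_pos: "x > 0" and X: "cubic_val \<theta> X = x"
  shows "norm\<^sub>K X = 1"
proof -
  obtain Y where Y: "cubic_val \<theta> Y = inverse x"
    using unit(2) unfolding ring_of_integers_def numfield_iff_cubic_val by blast
  have "cubic_val \<theta> (cubic_mult (of_int p) (of_int q) X Y) = cubic_val \<theta> (1, 0, 0)"
    using x_pos by (simp add: cubic_val_mult[OF theta_cube] X Y)
  then have "norm\<^sub>K X * norm\<^sub>K Y = 1"
    using cubic_val_inj cubic_norm_mult cubic_norm_one by metis
  moreover obtain i j where "norm\<^sub>K X = of_int i" "norm\<^sub>K Y = of_int j"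
    using norm_in_Ints X Y unit by (metis Ints_cases)
  moreover have "norm\<^sub>K X \<ge> 0" using cubic_norm_nonneg[OF disc] X x_pos by simp
  ultimately have "i * j = 1" "i \<ge> 0" by (metis of_int_eq_1_iff of_int_mult, simp)
  then have "i = 1" using pos_zmult_eq_1_iff[of i j] by (cases "i = 0") auto
  with \<open>norm\<^sub>K X = of_int i\<close> show ?thesis by simp
qed

end

section \<open>Powers of the unit\<close>

lemma tendsto_0_if_square_le:
  fixes X E :: "nat \<Rightarrow> real"
  assumes "\<forall>\<^sub>F n in sequentially. (X n)^2 \<le> E n" and "E \<longlonglongrightarrow> 0"
  shows "X \<longlonglongrightarrow> 0"
proof -
  have "(\<lambda>n. sqrt (E n)) \<longlonglongrightarrow> 0" using tendsto_real_sqrt[OF assms(2)] by simp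
  moreover have "\<forall>\<^sub>F n in sequentially. \<bar>X n\<bar> \<le> sqrt (E n)"
    using assms(1) by eventually_elim (metis real_sqrt_abs real_sqrt_le_mono)
  moreover have "\<forall>\<^sub>F n in sequentially. 0 \<le> \<bar>X n\<bar>" by simp
  ultimately have "(\<lambda>n. \<bar>X n\<bar>) \<longlonglongrightarrow> 0"
    using tendsto_sandwich[of "\<lambda>_. 0" "\<lambda>n. \<bar>X n\<bar>" sequentially "\<lambda>n. sqrt (E n)" 0] by simp
  then show ?thesis by (simp add: tendsto_rabs_zero_iff)
qed

lemma nidist_of_int_add: "\<bar>e\<bar> < 1/2 \<Longrightarrow> nidist (of_int m + e) = e"
  unfolding nidist_def by (subst floor_unique[of m]) auto

locale unit_powers = cubic_order +
  fixes lam :: real and a b c :: "nat \<Rightarrow> rat"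
  assumes unique_real_root: "\<forall>x::real. x^3 - of_int p * x - of_int q = 0 \<longrightarrow> x = \<theta>"
    and unit: "lam \<in> ring_of_integers \<theta>" "inverse lam \<in> ring_of_integers \<theta>"
    and lam_gt_1: "lam > 1"
    and power_coords: "\<forall>n\<ge>1. lam^n = of_rat (a n) + of_rat (b n) * \<theta> + of_rat (c n) * \<theta>^2"
begin

definition u_err :: "nat \<Rightarrow> real" where
  "u_err n = of_rat (c n) * \<theta> - of_rat (b n)"

definition v_err :: "nat \<Rightarrow> real" where
  "v_err n = of_rat (c n) * \<theta>^2 - of_rat (a n) - of_rat (c n) * of_int p"

lemma cubic_val_power_coords: "n \<ge> 1 \<Longrightarrow> cubic_val \<theta> (a n, b n, c n) = lam ^ n"
  using power_coords by (metis cubic_val.simps)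

lemma norm_power_coords:
  assumes "n \<ge> 1"
  shows "norm\<^sub>K (a n, b n, c n) = 1"
proof (rule positive_unit_norm_eq_1)
  show "3 * \<theta>^2 - 4 * of_int p \<ge> 0"
    using disc_pos[OF unique_real_root] by simp
  show "lam ^ n \<in> ring_of_integers \<theta>"
    by (rule ring_of_integers_power[OF unit(1)])
  show "inverse (lam ^ n) \<in> ring_of_integers \<theta>"
    using ring_of_integers_power[OF unit(2)] by (simp add: power_inverse)
  show "lam ^ n > 0"
    using lam_gt_1 by simp
  show "cubic_val \<theta> (a n, b n, c n) = lam ^ n"
    by (rule cubic_val_power_coords[OF assms])
qed

lemma power_coords_denom:
  assumes "n \<ge> 1"
  obtains r0 r1 r2 :: int
  where "(a n, b n, c n) = (of_int r0 / of_nat d, of_int r1 / of_nat d, of_int r2 / of_nat d)"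
  using ring_of_integers_coords ring_of_integers_power[OF unit(1)] cubic_val_power_coords[OF assms]
  by metis

lemma err_ellipse:
  assumes "n \<ge> 1"
  shows "(\<theta> * u_err n - 2 * v_err n)^2 + (3 * \<theta>^2 - 4 * of_int p) * u_err n ^ 2 = 4 / lam ^ n"
proof -
  have "cubic_val \<theta> (a n, b n, c n) * conj_norm4 \<theta> (of_int p) (a n, b n, c n)
      = 4 * of_rat (norm\<^sub>K (a n, b n, c n))"
    by (rule cubic_val_mult_conj_norm4[OF theta_cube])
  then have "lam ^ n * conj_norm4 \<theta> (of_int p) (a n, b n, c n) = 4"
    by (simp only: cubic_val_power_coords[OF assms] norm_power_coords[OF assms]) simp
  then have "conj_norm4 \<theta> (of_int p) (a n, b n, c n) = 4 / lam ^ n"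
    using lam_gt_1 by (simp add: field_simps)
  then show ?thesis by (simp add: u_err_def v_err_def)
qed

lemma err_ellipse_tendsto_0:
  "(\<lambda>n. (\<theta> * u_err n - 2 * v_err n)^2 + (3 * \<theta>^2 - 4 * of_int p) * u_err n ^ 2) \<longlonglongrightarrow> 0"
proof -
  have "(\<lambda>n. 4 * inverse (lam ^ n)) \<longlonglongrightarrow> 4 * 0"
    using LIMSEQ_inverse_realpow_zero[OF lam_gt_1] by (intro tendsto_mult tendsto_const)
  then have "(\<lambda>n. 4 / lam ^ n) \<longlonglongrightarrow> 0" by (simp add: divide_inverse)
  then show ?thesis
    by (rule Lim_transform_eventually)
      (use err_ellipse in \<open>auto simp: eventually_sequentially intro!: exI[of _ 1]\<close>)
qed

lemma u_err_tendsto_0: "u_err \<longlonglongrightarrow> 0"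
proof (rule tendsto_0_if_square_le)
  let ?D = "3 * \<theta>^2 - 4 * of_int p"
  have "?D > 0" by (rule disc_pos[OF unique_real_root])
  then show "\<forall>\<^sub>F n in sequentially.
      u_err n ^ 2 \<le> ((\<theta> * u_err n - 2 * v_err n)^2 + ?D * u_err n ^ 2) / ?D"
    by (simp add: field_simps)
  show "(\<lambda>n. ((\<theta> * u_err n - 2 * v_err n)^2 + ?D * u_err n ^ 2) / ?D) \<longlonglongrightarrow> 0"
    using tendsto_divide_zero[OF err_ellipse_tendsto_0] .
qed

lemma v_err_tendsto_0: "v_err \<longlonglongrightarrow> 0"
proof -
  have "(\<lambda>n. \<theta> * u_err n - 2 * v_err n) \<longlonglongrightarrow> 0"
    by (rule tendsto_0_if_square_le[OF _ err_ellipse_tendsto_0])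
      (use disc_pos[OF unique_real_root] in \<open>auto intro: always_eventually\<close>)
  then have "(\<lambda>n. \<theta> * u_err n - (\<theta> * u_err n - 2 * v_err n)) \<longlonglongrightarrow> \<theta> * 0 - 0"
    by (intro tendsto_intros u_err_tendsto_0)
  then have "(\<lambda>n. 1/2 * (2 * v_err n)) \<longlonglongrightarrow> 0"
    by (intro tendsto_mult_right_zero) simp
  then show ?thesis by simp
qed

lemma deriv_times_c_eq:
  "n \<ge> 1 \<Longrightarrow> (3 * \<theta>^2 - of_int p) * of_rat (c n) = lam ^ n + \<theta> * u_err n + v_err n"
  by (simp add: power_coords u_err_def v_err_def algebra_simps power2_eq_square)

lemma c_over_power_tendsto: "(\<lambda>n. of_rat (c n) / lam ^ n) \<longlonglongrightarrow> 1 / (3 * \<theta>^2 - of_int p)"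
proof -
  let ?F = "3 * \<theta>^2 - of_int p"
  have "?F > 0" using disc_pos[OF unique_real_root] by (smt (verit) zero_le_power2)
  have "(\<lambda>n. (1 + (\<theta> * u_err n + v_err n) * inverse lam ^ n) / ?F) \<longlonglongrightarrow> (1 + (\<theta> * 0 + 0) * 0) / ?F"
    using LIMSEQ_realpow_zero[of "inverse lam"] lam_gt_1 \<open>?F > 0\<close>
    by (intro tendsto_intros u_err_tendsto_0 v_err_tendsto_0) (auto simp: inverse_less_1_iff)
  then have "(\<lambda>n. (1 + (\<theta> * u_err n + v_err n) * inverse lam ^ n) / ?F) \<longlonglongrightarrow> 1 / ?F"
    by simp
  then show ?thesis
  proof (rule Lim_transform_eventually, unfold eventually_sequentially, intro exI allI impI)
    fix n :: nat assume "n \<ge> 1"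
    have "(1 + (\<theta> * u_err n + v_err n) * inverse lam ^ n) / ?F
        = (lam ^ n + (\<theta> * u_err n + v_err n)) / (?F * lam ^ n)"
      using lam_gt_1 by (simp add: field_simps power_inverse)
    also have "\<dots> = (?F * of_rat (c n)) / (?F * lam ^ n)"
      using deriv_times_c_eq[OF \<open>n \<ge> 1\<close>] by (simp add: add.assoc)
    also have "\<dots> = of_rat (c n) / lam ^ n"
      using \<open>?F > 0\<close> by simp
    finally show "(1 + (\<theta> * u_err n + v_err n) * inverse lam ^ n) / ?F = of_rat (c n) / lam ^ n" .
  qed
qed

lemma eventually_c_pos: "\<forall>\<^sub>F n in sequentially. c n > 0"
proof -
  have "1 / (3 * \<theta>^2 - of_int p) > 0"
    using disc_pos[OF unique_real_root] by (smt (verit) divide_pos_pos zero_le_power2)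
  then have "\<forall>\<^sub>F n in sequentially. of_rat (c n) / lam ^ n > 0"
    using order_tendstoD(1)[OF c_over_power_tendsto] by blast
  then show ?thesis
    by eventually_elim (use lam_gt_1 in \<open>simp add: zero_less_divide_iff\<close>)
qed

lemma eventually_nidist_eq:
  "\<forall>\<^sub>F n in sequentially. nidist (real d * of_rat (c n) * \<theta>) = real d * u_err n
      \<and> nidist (real d * of_rat (c n) * \<theta>^2) = real d * v_err n"
proof -
  have "\<forall>\<^sub>F n in sequentially. \<bar>real d * u_err n\<bar> < 1/2" "\<forall>\<^sub>F n in sequentially. \<bar>real d * v_err n\<bar> < 1/2"
    using tendstoD[OF tendsto_mult_right_zero[OF u_err_tendsto_0], of "1/2" "real d"]
      tendstoD[OF tendsto_mult_right_zero[OF v_err_tendsto_0], of "1/2" "real d"] by auto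
  with eventually_ge_at_top[of 1] show ?thesis
  proof eventually_elim
    case (elim n)
    obtain r0 r1 r2 :: int
      where r: "(a n, b n, c n) = (of_int r0 / of_nat d, of_int r1 / of_nat d, of_int r2 / of_nat d)"
      using power_coords_denom[OF elim(1)] .
    have "real d * of_rat (c n) * \<theta> = of_int r1 + real d * u_err n"
      using r d_pos by (simp add: u_err_def of_rat_divide algebra_simps)
    moreover have "real d * of_rat (c n) * \<theta>^2 = of_int (r0 + r2 * p) + real d * v_err n"
      using r d_pos by (simp add: v_err_def of_rat_divide algebra_simps)
    ultimately show ?case
      using elim(2,3) nidist_of_int_add[of "real d * u_err n" r1]
        nidist_of_int_add[of "real d * v_err n" "r0 + r2 * p"] by simp
  qed
qed

lemma eventually_ellipse_eq:
  "\<forall>\<^sub>F n in sequentially. (let k = real_of_rat (of_nat d * c n);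
              u = sqrt k * nidist (k * \<theta>);
              v = sqrt k * nidist (k * \<theta>^2)
          in (\<theta> * u - 2 * v)^2 + (3 * \<theta>^2 - 4 * of_int p) * u^2)
    = 4 * real d ^ 3 * (of_rat (c n) / lam ^ n)"
  using eventually_c_pos eventually_nidist_eq eventually_ge_at_top[of 1]
proof eventually_elim
  case (elim n)
  define k where "k = real d * of_rat (c n)"
  define s where "s = sqrt k"
  have "k > 0" using elim(1) d_pos by (simp add: k_def)
  have nidist_k: "nidist (k * \<theta>) = real d * u_err n" "nidist (k * \<theta>^2) = real d * v_err n"
    using elim(2) by (simp_all add: k_def)
  have "(let k = real_of_rat (of_nat d * c n); u = sqrt k * nidist (k * \<theta>); v = sqrt k * nidist (k * \<theta>^2)
      in (\<theta> * u - 2 * v)^2 + (3 * \<theta>^2 - 4 * of_int p) * u^2)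
      = (\<theta> * (s * (real d * u_err n)) - 2 * (s * (real d * v_err n)))^2
        + (3 * \<theta>^2 - 4 * of_int p) * (s * (real d * u_err n))^2"
    by (simp add: Let_def of_rat_mult k_def[symmetric] s_def[symmetric] nidist_k)
  also have "\<dots> = s^2 * (real d)^2
      * ((\<theta> * u_err n - 2 * v_err n)^2 + (3 * \<theta>^2 - 4 * of_int p) * u_err n ^ 2)"
    by (simp add: power2_eq_square algebra_simps)
  also have "\<dots> = k * (real d)^2 * (4 / lam ^ n)"
    using \<open>k > 0\<close> by (simp add: s_def err_ellipse[OF elim(3)])
  also have "\<dots> = 4 * real d ^ 3 * (of_rat (c n) / lam ^ n)"
    by (simp add: k_def power2_eq_square power3_eq_cube)
  finally show ?case .
qed

lemma ellipse_limit:
  "(\<lambda>n. let k = real_of_rat (of_nat d * c n);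
              u = sqrt k * nidist (k * \<theta>);
              v = sqrt k * nidist (k * \<theta>^2)
          in (\<theta> * u - 2 * v)^2 + (3 * \<theta>^2 - 4 * of_int p) * u^2)
    \<longlonglongrightarrow> 4 * real d ^ 3 / (3 * \<theta>^2 - of_int p)"
proof -
  have "(\<lambda>n. 4 * real d ^ 3 * (of_rat (c n) / lam ^ n)) \<longlonglongrightarrow> 4 * real d ^ 3 * (1 / (3 * \<theta>^2 - of_int p))"
    by (intro tendsto_intros c_over_power_tendsto)
  then show ?thesis
    using eventually_ellipse_eq by (simp add: Lim_transform_eventually eq_commute)
qed

end

theorem mainTheorem18:
  fixes p q :: int and \<theta> lam :: real and d :: nat and a b c :: "nat \<Rightarrow> rat"
  assumes irred: "irreducible ([:- of_int q, - of_int p, 0, 1:] :: rat poly)"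
    and root: "\<theta>^3 - of_int p * \<theta> - of_int q = 0"
    and unique_real_root: "\<forall>x::real. x^3 - of_int p * x - of_int q = 0 \<longrightarrow> x = \<theta>"
    and d_pos: "d > 0"
    and d_bound: "\<forall>x \<in> ring_of_integers \<theta>.
        \<exists>r0 r1 r2 :: int. x = (of_int r0 + of_int r1 * \<theta> + of_int r2 * \<theta>^2) / real d"
    and unit: "lam \<in> ring_of_integers \<theta>" "inverse lam \<in> ring_of_integers \<theta>"
    and lam_gt: "lam > 1"
    and abc: "\<forall>n\<ge>1. lam^n = of_rat (a n) + of_rat (b n) * \<theta> + of_rat (c n) * \<theta>^2"
  shows "(\<forall>\<^sub>F n in sequentially. of_nat d * c n > 0) \<and>
    ((\<lambda>n. let k = real_of_rat (of_nat d * c n);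
              u = sqrt k * nidist (k * \<theta>);
              v = sqrt k * nidist (k * \<theta>^2)
          in (\<theta> * u - 2 * v)^2 + (3 * \<theta>^2 - 4 * of_int p) * u^2)
      \<longlonglongrightarrow> 4 * real d ^ 3 / (3 * \<theta>^2 - of_int p))"
proof -
  interpret unit_powers p q \<theta> d lam a b c
    by unfold_locales (fact assms)+
  have "\<forall>\<^sub>F n in sequentially. of_nat d * c n > 0"
    using eventually_c_pos by eventually_elim (use d_pos in simp)
  with ellipse_limit show ?thesis by blast
qed

end
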